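(* Let $L$ be a shift having left special factors of arbitrarily large length, and let $\mu$ be a $\sigma$-invariant, nonatomic, regular Borel probability measure on $L$, positive on nonempty cylinders, with $\mu(SP_L)=0$. Let $V=\{v^{(k)}\}_{k>0}$ be as defined below. Then $V$ is infinite and $L=\bigsqcup_{k>0}Cyl_L(v^{(k)})\sqcup W_{SP_L}$, a disjoint union, where $W_{SP_L}=\sigma^{-1}(SP_L)$. Moreover: (i) for every $k$ and all $w<w'$ in $Cyl_L(v^{(k)})$, $\sigma([w,w'])=[\sigma(w),\sigma(w')]$; (ii) $W_{SP_L}$ is nonempty, has $\mu$-measure $0$, and consists exactly of the accumulation points in $L$ of the set of endpoints (smallest and greatest words) of the cylinders $Cyl_L(v^{(k)})$.
   Context: $A$ is a finite totally ordered alphabet. $A^{\mathbb N}$ has the lexicographic order and the Cantor topology, and $\sigma$ deletes the first letter. A shift is a closed $L\subseteq A^{\mathbb N}$ with $\sigma(L)\subseteq L$. $Fact_L$ is the set of finite factors of words of $L$, and $Cyl_L(v)=\{w\in L: v \text{ prefix of } w\}$. For $w\le w'$ in $L$, $[w,w']=\{w''\in L:w\le w''\le w'\}$. A factor $u\in Fact_L$ is left special if $bu\in Fact_L$ for at least two distinct $b\in A$. $SP_L$ is the set of infinite words all of whose finite prefixes are left special factors of $L$. Let $V=\{v^{(k)}\}_{k>0}$ be an enumeration of the set of words $au\in Fact_L$ with $a\in A$ and $u$ a nonempty word such that $u$ is not left special while every nonempty proper prefix of $u$ is left special. These are the cylinders produced by iteratively refining $CYL_L(n)$, stopping at cylinders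 $Cyl_L(au)$ with $u$ not left special. *)

theory Defs
  imports "HOL-Analysis.Analysis" "HOL-Probability.Probability"
begin

(* Infinite words over a finite totally ordered alphabet 'a are functions nat => 'a;
   finite words are lists. *)

definition shift :: "(nat \<Rightarrow> 'a) \<Rightarrow> (nat \<Rightarrow> 'a)" where
  "shift w = (\<lambda>n. w (Suc n))"

definition lex_less :: "(nat \<Rightarrow> 'a::linorder) \<Rightarrow> (nat \<Rightarrow> 'a) \<Rightarrow> bool" where
  "lex_less w w' \<longleftrightarrow> (\<exists>n. (\<forall>i<n. w i = w' i) \<and> w n < w' n)"

definition lex_le :: "(nat \<Rightarrow> 'a::linorder) \<Rightarrow> (nat \<Rightarrow> 'a) \<Rightarrow> bool" where
  "lex_le w w' \<longleftrightarrow> lex_less w w' \<or> w = w'"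

definition cantor_top :: "(nat \<Rightarrow> 'a) topology" where
  "cantor_top = product_topology (\<lambda>_. discrete_topology UNIV) UNIV"

definition is_shift :: "(nat \<Rightarrow> 'a) set \<Rightarrow> bool" where
  "is_shift L \<longleftrightarrow> closedin cantor_top L \<and> shift ` L \<subseteq> L"

definition is_prefix :: "'a list \<Rightarrow> (nat \<Rightarrow> 'a) \<Rightarrow> bool" where
  "is_prefix v w \<longleftrightarrow> (\<forall>i<length v. w i = v ! i)"

definition Fact :: "(nat \<Rightarrow> 'a) set \<Rightarrow> 'a list set" where
  "Fact L = {u. \<exists>w\<in>L. \<exists>i. u = map w [i..<i + length u]}"

definition Cyl :: "(nat \<Rightarrow> 'a) set \<Rightarrow> 'a list \<Rightarrow> (nat \<Rightarrow> 'a) set" where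
  "Cyl L v = {w\<in>L. is_prefix v w}"

definition interval :: "(nat \<Rightarrow> 'a::linorder) set \<Rightarrow> (nat \<Rightarrow> 'a) \<Rightarrow> (nat \<Rightarrow> 'a) \<Rightarrow> (nat \<Rightarrow> 'a) set" where
  "interval L w w' = {x\<in>L. lex_le w x \<and> lex_le x w'}"

definition left_special :: "(nat \<Rightarrow> 'a) set \<Rightarrow> 'a list \<Rightarrow> bool" where
  "left_special L u \<longleftrightarrow> (\<exists>b c. b \<noteq> c \<and> b # u \<in> Fact L \<and> c # u \<in> Fact L)"

definition SP :: "(nat \<Rightarrow> 'a) set \<Rightarrow> (nat \<Rightarrow> 'a) set" where
  "SP L = {w. \<forall>n. left_special L (map w [0..<n])}"

definition W_SP :: "(nat \<Rightarrow> 'a) set \<Rightarrow> (nat \<Rightarrow> 'a) set" where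
  "W_SP L = {w\<in>L. shift w \<in> SP L}"

definition Vset :: "(nat \<Rightarrow> 'a) set \<Rightarrow> 'a list set" where
  "Vset L = {a # u | a u. a # u \<in> Fact L \<and> u \<noteq> [] \<and> \<not> left_special L u \<and>
               (\<forall>k. 0 < k \<and> k < length u \<longrightarrow> left_special L (take k u))}"

definition endpoints :: "(nat \<Rightarrow> 'a::linorder) set \<Rightarrow> (nat \<Rightarrow> 'a) set" where
  "endpoints L = {x. \<exists>v\<in>Vset L. x \<in> Cyl L v \<and>
       ((\<forall>y\<in>Cyl L v. lex_le x y) \<or> (\<forall>y\<in>Cyl L v. lex_le y x))}"

definition borel_sets_of :: "'b topology \<Rightarrow> 'b set set" where
  "borel_sets_of T = sigma_sets (topspace T) {U. openin T U}"

definition regular_measure :: "'b topology \<Rightarrow> 'b measure \<Rightarrow> bool" where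
  "regular_measure T M \<longleftrightarrow> (\<forall>S\<in>sets M.
      emeasure M S = (INF U\<in>{U. openin T U \<and> S \<subseteq> U}. emeasure M U) \<and>
      emeasure M S = (SUP K\<in>{K. compactin T K \<and> K \<subseteq> S}. emeasure M K))"

end

theory Submission
  imports Defs
begin

(*
  Cut a word w of L just after the shortest prefix of \<sigma>(w) that is not left special: unless
  \<sigma>(w) \<in> SP_L, this yields a word a u \<in> V with w \<in> Cyl_L(a u). The cylinders of V are
  pairwise disjoint because every proper prefix of u is left special, and they miss W_SP_L
  because u is not. Since u is not left special, a is the only letter that can precede u, so
  \<sigma> is an order isomorphism from an interval of Cyl_L(a u) onto an interval of L; this uses
  \<sigma>(L) = L, which holds because L - \<sigma>(L) is open (\<sigma>(L) is compact) and null by invariance,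
  while nonempty open sets contain a cylinder of positive measure.

  W_SP_L = \<sigma>^-1(SP_L) is closed and null, so it contains no cylinder. Hence every
  neighbourhood of a point of W_SP_L contains a cylinder of V, and with it the least word of
  that cylinder, an endpoint outside W_SP_L; this also shows that V is infinite. Conversely a
  point of Cyl_L(v) is isolated from the endpoints, of which Cyl_L(v) contains at most two.
  Finally SP_L, and hence W_SP_L, is nonempty by K\<ouml>nig's lemma applied to the arbitrarily
  long left special factors.
*)

section \<open>The Cantor topology\<close>

definition cyl :: "nat \<Rightarrow> (nat \<Rightarrow> 'a) \<Rightarrow> (nat \<Rightarrow> 'a) set" where
  "cyl n x = {y. \<forall>i<n. y i = x i}"

lemma mem_cyl_self [simp]: "x \<in> cyl n x"
  by (simp add: cyl_def)

lemma map_eq_if_mem_cyl: "z \<in> cyl n y \<Longrightarrow> map z [0..<n] = map y [0..<n]"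
  by (intro map_cong) (auto simp: cyl_def)

lemma topspace_cantor_top [simp]: "topspace cantor_top = UNIV"
  by (simp add: cantor_top_def)

lemma openin_cantor_top_iff: "openin cantor_top U \<longleftrightarrow> (\<forall>x\<in>U. \<exists>n. cyl n x \<subseteq> U)"
proof
  assume U: "openin cantor_top U"
  show "\<forall>x\<in>U. \<exists>n. cyl n x \<subseteq> U"
  proof
    fix x assume "x \<in> U"
    then obtain V where V: "finite {i. V i \<noteq> UNIV}" "x \<in> Pi\<^sub>E UNIV V" "Pi\<^sub>E UNIV V \<subseteq> U"
      using U by (auto simp: cantor_top_def openin_product_topology_alt)
    then obtain n where "{i. V i \<noteq> UNIV} \<subseteq> {..<n}"
      using finite_nat_bounded by blast
    then have "cyl n x \<subseteq> Pi\<^sub>E UNIV V"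
      using V(2) by (fastforce simp: cyl_def PiE_iff)
    then show "\<exists>n. cyl n x \<subseteq> U"
      using V(3) by blast
  qed
next
  assume cyl: "\<forall>x\<in>U. \<exists>n. cyl n x \<subseteq> U"
  show "openin cantor_top U"
    unfolding cantor_top_def openin_product_topology_alt
  proof
    fix x assume "x \<in> U"
    then obtain n where n: "cyl n x \<subseteq> U"
      using cyl by blast
    define V where "V i = (if i < n then {x i} else UNIV)" for i
    have "y \<in> Pi\<^sub>E UNIV V \<longleftrightarrow> (\<forall>i. i < n \<longrightarrow> y i = x i)" for y
      by (simp add: PiE_iff V_def)
    then have "Pi\<^sub>E UNIV V = cyl n x"
      by (auto simp: cyl_def)
    moreover have "finite {i. V i \<noteq> UNIV}"
      by (rule finite_subset[of _ "{..<n}"]) (auto simp: V_def)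
    ultimately show "\<exists>V. finite {i \<in> UNIV. V i \<noteq> topspace (discrete_topology UNIV)} \<and>
        (\<forall>i\<in>UNIV. openin (discrete_topology UNIV) (V i)) \<and> x \<in> Pi\<^sub>E UNIV V \<and> Pi\<^sub>E UNIV V \<subseteq> U"
      using n by (intro exI[of _ V]) simp
  qed
qed

lemma openin_cyl: "openin cantor_top (cyl n x)"
  unfolding openin_cantor_top_iff
proof
  fix y assume "y \<in> cyl n x"
  then have "cyl n y \<subseteq> cyl n x"
    by (auto simp: cyl_def)
  then show "\<exists>m. cyl m y \<subseteq> cyl n x"
    by blast
qed

lemma openin_subtopology_cantor_top_iff:
  "openin (subtopology cantor_top L) U \<longleftrightarrow> U \<subseteq> L \<and> (\<forall>x\<in>U. \<exists>n. cyl n x \<inter> L \<subseteq> U)"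
proof
  assume "openin (subtopology cantor_top L) U"
  then obtain T where T: "openin cantor_top T" "U = T \<inter> L"
    by (auto simp: openin_subtopology)
  have "\<exists>n. cyl n x \<inter> L \<subseteq> U" if "x \<in> U" for x
  proof -
    have "x \<in> T"
      using T(2) that by blast
    then obtain n where "cyl n x \<subseteq> T"
      using T(1) unfolding openin_cantor_top_iff by blast
    then show ?thesis
      using T(2) by blast
  qed
  then show "U \<subseteq> L \<and> (\<forall>x\<in>U. \<exists>n. cyl n x \<inter> L \<subseteq> U)"
    using T(2) by blast
next
  assume U: "U \<subseteq> L \<and> (\<forall>x\<in>U. \<exists>n. cyl n x \<inter> L \<subseteq> U)"
  obtain N where N: "\<forall>x\<in>U. cyl (N x) x \<inter> L \<subseteq> U"
    using bchoice[OF conjunct2[OF U]] by blast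
  have "openin cantor_top (\<Union>x\<in>U. cyl (N x) x)"
    by (rule openin_Union) (auto intro: openin_cyl)
  moreover have "U = (\<Union>x\<in>U. cyl (N x) x) \<inter> L"
  proof
    show "U \<subseteq> (\<Union>x\<in>U. cyl (N x) x) \<inter> L"
      using U by auto
    show "(\<Union>x\<in>U. cyl (N x) x) \<inter> L \<subseteq> U"
      using N by blast
  qed
  ultimately show "openin (subtopology cantor_top L) U"
    unfolding openin_subtopology by blast
qed

lemma closedin_cantor_top_limit:
  assumes "closedin cantor_top C" and "\<And>n. cyl n s \<inter> C \<noteq> {}"
  shows "s \<in> C"
proof (rule ccontr)
  assume "s \<notin> C"
  moreover have "openin cantor_top (UNIV - C)"
    using assms(1) by (simp add: closedin_def)
  ultimately obtain n where "cyl n s \<subseteq> UNIV - C"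
    by (auto simp: openin_cantor_top_iff)
  then show False
    using assms(2) by blast
qed

lemma Hausdorff_cantor_top: "Hausdorff_space cantor_top"
  by (simp add: cantor_top_def Hausdorff_space_product_topology)

lemma compact_space_cantor_top: "compact_space (cantor_top :: (nat \<Rightarrow> 'a::finite) topology)"
  unfolding cantor_top_def compact_space_product_topology compact_space_discrete_topology
  by (intro disjI2 ballI finite)

lemma continuous_map_shift: "continuous_map cantor_top cantor_top shift"
proof -
  have "continuous_map cantor_top (discrete_topology UNIV) (\<lambda>x. x k)" for k
    unfolding cantor_top_def by (rule continuous_map_product_projection[OF UNIV_I])
  then have "continuous_map cantor_top (product_topology (\<lambda>_. discrete_topology UNIV) UNIV)
      (\<lambda>x n. x (Suc n))"
    by (rule continuous_map_componentwise_UNIV[THEN iffD2, rule_format])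
  then show ?thesis
    by (simp only: shift_def[abs_def] cantor_top_def)
qed

lemma closedin_shift_image:
  fixes C :: "(nat \<Rightarrow> 'a::finite) set"
  assumes "closedin cantor_top C"
  shows "closedin cantor_top (shift ` C)"
proof -
  have "compactin cantor_top C"
    by (rule closedin_compact_space[OF compact_space_cantor_top assms])
  then have "compactin cantor_top (shift ` C)"
    by (rule image_compactin[OF _ continuous_map_shift])
  then show ?thesis
    by (rule compactin_imp_closedin[OF Hausdorff_cantor_top])
qed

section \<open>Prefixes, factors and cylinders\<close>

lemma prefix_eq_map: "is_prefix v x \<Longrightarrow> v = map x [0..<length v]"
  unfolding is_prefix_def by (simp add: nth_equalityI)

lemma is_prefix_map [simp]: "is_prefix (map x [0..<n]) x"
  unfolding is_prefix_def by simp

lemma is_prefix_snoc_iff: "is_prefix (u @ [a]) w \<longleftrightarrow> is_prefix u w \<and> w (length u) = a"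
  by (auto simp: is_prefix_def nth_append less_Suc_eq)

lemma is_prefix_Cons_iff: "is_prefix (a # u) w \<longleftrightarrow> w 0 = a \<and> is_prefix u (shift w)"
  by (auto simp: is_prefix_def shift_def less_Suc_eq_0_disj)

lemma Cyl_map_prefix: "Cyl L (map x [0..<n]) = cyl n x \<inter> L"
  by (auto simp: Cyl_def cyl_def is_prefix_def)

lemma openin_Cyl: "openin (subtopology cantor_top L) (Cyl L v)"
  unfolding openin_subtopology_cantor_top_iff
proof (intro conjI ballI)
  show "Cyl L v \<subseteq> L"
    by (auto simp: Cyl_def)
  fix y assume "y \<in> Cyl L v"
  then have "cyl (length v) y \<inter> L \<subseteq> Cyl L v"
    by (auto simp: Cyl_def cyl_def is_prefix_def)
  then show "\<exists>n. cyl n y \<inter> L \<subseteq> Cyl L v"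
    by blast
qed

lemma closedin_Cyl:
  assumes "closedin cantor_top L"
  shows "closedin cantor_top (Cyl L v)"
proof -
  have "openin cantor_top (UNIV - {y. is_prefix v y})"
    unfolding openin_cantor_top_iff
  proof
    fix x assume "x \<in> UNIV - {y. is_prefix v y}"
    then have "cyl (length v) x \<subseteq> UNIV - {y. is_prefix v y}"
      by (auto simp: cyl_def is_prefix_def)
    then show "\<exists>n. cyl n x \<subseteq> UNIV - {y. is_prefix v y}"
      by blast
  qed
  then have "closedin cantor_top {y. is_prefix v y}"
    by (simp add: closedin_def)
  moreover have "Cyl L v = L \<inter> {y. is_prefix v y}"
    by (auto simp: Cyl_def)
  ultimately show ?thesis
    using assms by (simp add: closedin_Int)
qed

lemma Fact_if_prefix: "y \<in> L \<Longrightarrow> is_prefix u y \<Longrightarrow> u \<in> Fact L"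
proof -
  assume "y \<in> L" "is_prefix u y"
  then have "u = map y [0..<0 + length u]"
    using prefix_eq_map by simp
  then show ?thesis
    using \<open>y \<in> L\<close> unfolding Fact_def by blast
qed

lemma Fact_take: "u \<in> Fact L \<Longrightarrow> take k u \<in> Fact L"
proof (cases "length u \<le> k")
  case False
  assume "u \<in> Fact L"
  then obtain w i where w: "w \<in> L" "u = map w [i..<i + length u]"
    by (auto simp: Fact_def)
  from w(2) have "take k u = take k (map w [i..<i + length u])"
    by (rule arg_cong)
  also have "\<dots> = map w [i..<i + length (take k u)]"
    using False by (simp add: take_map take_upt)
  finally show ?thesis
    using w(1) unfolding Fact_def by blast
qed simp

lemma shift_funpow_mem: "is_shift L \<Longrightarrow> w \<in> L \<Longrightarrow> (shift ^^ i) w \<in> L"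
  by (induction i) (auto simp: is_shift_def)

lemma shift_funpow_apply: "(shift ^^ i) w n = w (n + i)"
  by (induction i arbitrary: n) (simp_all add: shift_def)

lemma Fact_imp_prefix: "is_shift L \<Longrightarrow> u \<in> Fact L \<Longrightarrow> \<exists>y\<in>L. is_prefix u y"
proof -
  assume L: "is_shift L" and "u \<in> Fact L"
  then obtain w i where w: "w \<in> L" "u = map w [i..<i + length u]"
    by (auto simp: Fact_def)
  have "u ! j = (shift ^^ i) w j" if "j < length u" for j
  proof -
    from w(2) have "u ! j = map w [i..<i + length u] ! j"
      by (rule arg_cong)
    then show ?thesis
      using that by (simp add: shift_funpow_apply add.commute)
  qed
  then have "is_prefix u ((shift ^^ i) w)"
    unfolding is_prefix_def by simp
  then show ?thesis
    using shift_funpow_mem[OF L w(1)] by blast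
qed

lemma Cyl_nonempty_iff: "is_shift L \<Longrightarrow> Cyl L v \<noteq> {} \<longleftrightarrow> v \<in> Fact L"
  unfolding Cyl_def using Fact_imp_prefix Fact_if_prefix by blast

lemma left_special_take: "left_special L u \<Longrightarrow> left_special L (take k u)"
  unfolding left_special_def by (metis Fact_take take_Suc_Cons)

lemma left_special_Nil:
  assumes "\<forall>n. \<exists>u. left_special L u \<and> n \<le> length u"
  shows "left_special L []"
proof -
  obtain u where "left_special L u"
    using assms by blast
  then show ?thesis
    using left_special_take[of L u 0] by simp
qed

section \<open>The lexicographic order\<close>

lemma lex_less_at_first_difference:
  assumes "lex_less w x" and "\<forall>i<j. w i = x i" and "w j \<noteq> x j"
  shows "w j < x j"
proof -
  obtain n where n: "\<forall>i<n. w i = x i" "w n < x n"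
    using assms(1) unfolding lex_less_def by blast
  have "n = j"
  proof (rule linorder_cases[of n j])
    assume "n < j"
    then show ?thesis
      using n(2) assms(2) by simp
  next
    assume "j < n"
    then show ?thesis
      using n(1) assms(3) by simp
  qed
  then show ?thesis
    using n(2) by simp
qed

lemma lex_less_asym: "lex_less w x \<Longrightarrow> \<not> lex_less x w"
proof
  assume wx: "lex_less w x" and xw: "lex_less x w"
  then obtain n where n: "\<forall>i<n. w i = x i" "w n < x n"
    unfolding lex_less_def by blast
  then have "x n < w n"
    using lex_less_at_first_difference[OF xw, of n] by simp
  then show False
    using n(2) by simp
qed

lemma lex_le_antisym:
  assumes "lex_le w x" and "lex_le x w"
  shows "w = x"
proof (rule ccontr)
  assume "w \<noteq> x"
  then have "lex_less w x" "lex_less x w"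
    using assms by (auto simp: lex_le_def)
  then show False
    using lex_less_asym by blast
qed

lemma first_difference:
  fixes x y :: "nat \<Rightarrow> 'a"
  assumes "\<exists>j. j < k \<and> x j \<noteq> y j"
  obtains j where "j < k" "x j \<noteq> y j" "\<forall>i<j. x i = y i"
proof -
  obtain j where j: "j < k" "x j \<noteq> y j" "\<forall>i<j. \<not> (i < k \<and> x i \<noteq> y i)"
    using exists_least_iff[of "\<lambda>j. j < k \<and> x j \<noteq> y j", THEN iffD1, OF assms] by blast
  then have "\<forall>i<j. x i = y i"
    by auto
  with j(1,2) show ?thesis
    by (rule that)
qed

lemma lex_le_between_agree:
  assumes "lex_le w x" and "lex_le x w'" and "\<forall>i<k. w i = w' i"
  shows "\<forall>i<k. x i = w i"
proof (rule ccontr)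
  assume "\<not> (\<forall>i<k. x i = w i)"
  then have "\<exists>j. j < k \<and> x j \<noteq> w j"
    by auto
  then obtain j where j: "j < k" "x j \<noteq> w j" "\<forall>i<j. x i = w i"
    by (rule first_difference)
  have "w \<noteq> x" "x \<noteq> w'"
    using j(1,2) assms(3) by auto
  then have "lex_less w x" "lex_less x w'"
    using assms(1,2) by (simp_all add: lex_le_def)
  moreover have "\<forall>i<j. w i = x i" "\<forall>i<j. x i = w' i"
    using j assms(3) by simp_all
  ultimately have "w j < x j" "x j < w' j"
    using j(1,2) assms(3) lex_less_at_first_difference by (metis, metis)
  then show False
    using j(1) assms(3) by simp
qed

lemma shift_eq_iff:
  assumes "w 0 = x 0"
  shows "shift w = shift x \<longleftrightarrow> w = x"
proof
  assume "shift w = shift x"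
  then have Suc_eq: "w (Suc n) = x (Suc n)" for n
    unfolding shift_def by (drule_tac x = n in fun_cong) simp
  show "w = x"
  proof (rule ext)
    fix n
    show "w n = x n"
      using assms Suc_eq by (cases n) simp_all
  qed
qed simp

lemma lex_less_shift_iff: "w 0 = x 0 \<Longrightarrow> lex_less (shift w) (shift x) \<longleftrightarrow> lex_less w x"
  unfolding lex_less_def shift_def
proof
  assume "w 0 = x 0" "\<exists>n. (\<forall>i<n. w (Suc i) = x (Suc i)) \<and> w (Suc n) < x (Suc n)"
  then obtain n where "\<forall>i<n. w (Suc i) = x (Suc i)" "w (Suc n) < x (Suc n)"
    by blast
  with \<open>w 0 = x 0\<close> show "\<exists>n. (\<forall>i<n. w i = x i) \<and> w n < x n"
    by (intro exI[of _ "Suc n"]) (auto simp: less_Suc_eq_0_disj)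
next
  assume "w 0 = x 0" "\<exists>n. (\<forall>i<n. w i = x i) \<and> w n < x n"
  then obtain n where "\<forall>i<n. w i = x i" "w n < x n"
    by blast
  with \<open>w 0 = x 0\<close> show "\<exists>n. (\<forall>i<n. w (Suc i) = x (Suc i)) \<and> w (Suc n) < x (Suc n)"
    by (intro exI[of _ "n - 1"]) (cases n; auto)
qed

lemma lex_le_shift_iff: "w 0 = x 0 \<Longrightarrow> lex_le (shift w) (shift x) \<longleftrightarrow> lex_le w x"
  unfolding lex_le_def by (simp add: lex_less_shift_iff shift_eq_iff)

section \<open>Constructing infinite words\<close>

lemma finite_ex_forall_antimono:
  fixes P :: "'a::finite \<Rightarrow> nat \<Rightarrow> bool"
  assumes "\<And>n. \<exists>a. P a n" and "\<And>a m n. P a n \<Longrightarrow> m \<le> n \<Longrightarrow> P a m"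
  shows "\<exists>a. \<forall>n. P a n"
proof (rule ccontr)
  assume "\<nexists>a. \<forall>n. P a n"
  then have "\<forall>a. \<exists>N. \<not> P a N"
    by blast
  then obtain N where N: "\<And>a. \<not> P a (N a)"
    by (rule choice[THEN exE]) blast
  obtain a where "P a (Max (range N))"
    using assms(1) by blast
  then have "P a (N a)"
    using assms(2) by simp
  then show False
    using N by blast
qed

lemma ex_word_with_prefixes:
  assumes "P []" and "\<And>u. P u \<Longrightarrow> \<exists>a. P (u @ [a])"
  shows "\<exists>s. \<forall>n. P (map s [0..<n])"
proof -
  have "\<exists>f. \<forall>n. (length (f n) = n \<and> P (f n)) \<and> (\<exists>a. f (Suc n) = f n @ [a])"
  proof (rule dependent_nat_choice)
    show "\<exists>u. length u = 0 \<and> P u"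
      using assms(1) by simp
  next
    fix u n assume u: "length u = n \<and> P u"
    then obtain a where "P (u @ [a])"
      using assms(2) by blast
    then show "\<exists>u'. (length u' = Suc n \<and> P u') \<and> (\<exists>a. u' = u @ [a])"
      using u by (intro exI[of _ "u @ [a]"]) simp
  qed
  then obtain f where f: "\<And>n. length (f n) = n" "\<And>n. P (f n)" "\<And>n. \<exists>a. f (Suc n) = f n @ [a]"
    by blast
  have "map (\<lambda>i. f (Suc i) ! i) [0..<n] = f n" for n
  proof (induction n)
    case 0
    then show ?case
      using f(1)[of 0] by simp
  next
    case (Suc n)
    obtain a where "f (Suc n) = f n @ [a]"
      using f(3) by blast
    then show ?case
      using Suc f(1)[of n] by (simp add: nth_append)
  qed
  then have "P (map (\<lambda>i. f (Suc i) ! i) [0..<n])" for n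
    using f(2) by simp
  then show ?thesis
    by blast
qed

definition greedy_prefix :: "(nat \<Rightarrow> 'a::linorder) set \<Rightarrow> 'a list \<Rightarrow> bool" where
  "greedy_prefix C u \<longleftrightarrow> (\<exists>y\<in>C. is_prefix u y) \<and>
      (\<forall>y\<in>C. \<forall>i<length u. (\<forall>j<i. y j = u ! j) \<longrightarrow> u ! i \<le> y i)"

lemma greedy_prefix_snoc:
  fixes C :: "(nat \<Rightarrow> 'a::{linorder,finite}) set"
  assumes u: "greedy_prefix C u"
  shows "\<exists>a. greedy_prefix C (u @ [a])"
proof -
  define A where "A = {y (length u) | y. y \<in> C \<and> is_prefix u y}"
  have "A \<noteq> {}"
    using u by (auto simp: greedy_prefix_def A_def)
  then have "Min A \<in> A"
    by (simp add: Min_in)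
  then obtain y where y: "y \<in> C" "is_prefix u y" "y (length u) = Min A"
    by (auto simp: A_def)
  have "is_prefix (u @ [Min A]) y"
    using y(2,3) by (simp add: is_prefix_snoc_iff)
  moreover have "(u @ [Min A]) ! i \<le> z i"
    if "z \<in> C" "i < length (u @ [Min A])" "\<forall>j<i. z j = (u @ [Min A]) ! j" for z i
  proof (cases "i < length u")
    case True
    then show ?thesis
      using u that by (simp add: greedy_prefix_def nth_append)
  next
    case False
    then have "i = length u"
      using that(2) by simp
    then have "is_prefix u z"
      using that(3) by (simp add: is_prefix_def nth_append)
    then have "z i \<in> A"
      using that(1) \<open>i = length u\<close> by (auto simp: A_def)
    then show ?thesis
      using \<open>i = length u\<close> by (simp add: nth_append)
  qed
  ultimately have "greedy_prefix C (u @ [Min A])"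
    using y(1) unfolding greedy_prefix_def by blast
  then show ?thesis ..
qed

lemma ex_lex_least:
  fixes C :: "(nat \<Rightarrow> 'a::{linorder,finite}) set"
  assumes "closedin cantor_top C" and "C \<noteq> {}"
  shows "\<exists>m\<in>C. \<forall>y\<in>C. lex_le m y"
proof -
  have "greedy_prefix C []"
    using assms(2) by (auto simp: greedy_prefix_def is_prefix_def)
  then obtain s where s: "\<And>n. greedy_prefix C (map s [0..<n])"
    using ex_word_with_prefixes[of "greedy_prefix C"] greedy_prefix_snoc by blast
  have "cyl n s \<inter> C \<noteq> {}" for n
    using s[of n] by (auto simp: greedy_prefix_def cyl_def is_prefix_def)
  then have "s \<in> C"
    using closedin_cantor_top_limit[OF assms(1)] by blast
  moreover have "lex_le s y" if "y \<in> C" for y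
  proof (cases "y = s")
    case False
    then obtain k where "y k \<noteq> s k"
      by (auto simp: fun_eq_iff)
    then have "\<exists>j. j < Suc k \<and> s j \<noteq> y j"
      by auto
    then obtain j where j: "j < Suc k" "s j \<noteq> y j" "\<forall>i<j. s i = y i"
      by (rule first_difference)
    have "\<forall>i<j. y i = map s [0..<Suc j] ! i"
      using j(3) by (simp del: upt_Suc)
    then have "s j \<le> y j"
      using s[of "Suc j"] that unfolding greedy_prefix_def by (simp del: upt_Suc)
    then have "lex_less s y"
      unfolding lex_less_def using j by (intro exI[of _ j]) simp
    then show ?thesis
      by (simp add: lex_le_def)
  qed (simp add: lex_le_def)
  ultimately show ?thesis
    by blast
qed

section \<open>Left special words and the cylinders of V\<close>

lemma closedin_SP: "closedin cantor_top (SP L)"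
proof -
  have "openin cantor_top (UNIV - SP L)"
    unfolding openin_cantor_top_iff
  proof
    fix y assume "y \<in> UNIV - SP L"
    then obtain n where n: "\<not> left_special L (map y [0..<n])"
      by (auto simp: SP_def)
    have "cyl n y \<subseteq> UNIV - SP L"
    proof
      fix z assume "z \<in> cyl n y"
      then have eq: "map z [0..<n] = map y [0..<n]"
        by (rule map_eq_if_mem_cyl)
      have "\<not> left_special L (map z [0..<n])"
        unfolding eq by (rule n)
      then show "z \<in> UNIV - SP L"
        unfolding SP_def by blast
    qed
    then show "\<exists>n. cyl n y \<subseteq> UNIV - SP L"
      by blast
  qed
  then show ?thesis
    by (simp add: closedin_def)
qed

lemma closedin_W_SP: "closedin (subtopology cantor_top L) (W_SP L)"
proof -
  have "continuous_map (subtopology cantor_top L) cantor_top shift"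
    by (rule continuous_map_from_subtopology[OF continuous_map_shift])
  then have "closedin (subtopology cantor_top L)
      {x \<in> topspace (subtopology cantor_top L). shift x \<in> SP L}"
    by (rule closedin_continuous_map_preimage[OF _ closedin_SP])
  then show ?thesis
    by (simp add: W_SP_def)
qed

lemma SP_subset_shift_image:
  fixes L :: "(nat \<Rightarrow> 'a::finite) set"
  assumes "is_shift L"
  shows "SP L \<subseteq> shift ` L"
proof
  fix s assume s: "s \<in> SP L"
  have "cyl n s \<inter> shift ` L \<noteq> {}" for n
  proof -
    obtain b where "b # map s [0..<n] \<in> Fact L"
      using s by (auto simp: SP_def left_special_def)
    then obtain y where y: "y \<in> L" "is_prefix (b # map s [0..<n]) y"
      using Fact_imp_prefix[OF assms] by blast
    then have "is_prefix (map s [0..<n]) (shift y)"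
      by (simp add: is_prefix_Cons_iff)
    then have "shift y \<in> cyl n s"
      by (simp add: cyl_def is_prefix_def)
    then show ?thesis
      using y(1) by blast
  qed
  moreover have "closedin cantor_top L"
    using assms by (simp add: is_shift_def)
  then have "closedin cantor_top (shift ` L)"
    by (rule closedin_shift_image)
  ultimately show "s \<in> shift ` L"
    using closedin_cantor_top_limit by blast
qed

lemma SP_nonempty:
  fixes L :: "(nat \<Rightarrow> 'a::finite) set"
  assumes "\<forall>n. \<exists>u. left_special L u \<and> n \<le> length u"
  shows "SP L \<noteq> {}"
proof -
  \<comment> \<open>K\<ouml>nig's lemma: grow a word letter by letter, keeping left special extensions of every length.\<close>
  define P where "P u \<longleftrightarrow> (\<forall>n. \<exists>u'. left_special L (u @ u') \<and> n \<le> length u')" for u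
  have "P []"
    using assms by (simp add: P_def)
  moreover have "\<exists>a. P (u @ [a])" if u: "P u" for u
  proof -
    have "\<exists>a. \<forall>n. \<exists>u'. left_special L (u @ [a] @ u') \<and> n \<le> length u'"
    proof (rule finite_ex_forall_antimono)
      fix n
      obtain u' where u': "left_special L (u @ u')" "Suc n \<le> length u'"
        using u unfolding P_def by blast
      then obtain a u'' where "u' = a # u''"
        by (cases u') auto
      then show "\<exists>a u'. left_special L (u @ [a] @ u') \<and> n \<le> length u'"
        using u' by auto
    next
      fix a m n assume "\<exists>u'. left_special L (u @ [a] @ u') \<and> n \<le> length u'" "m \<le> n"
      then show "\<exists>u'. left_special L (u @ [a] @ u') \<and> m \<le> length u'"
        by auto
    qed
    then show ?thesis
      by (simp add: P_def)
  qed
  ultimately obtain s where s: "\<And>n. P (map s [0..<n])"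
    using ex_word_with_prefixes[of P] by blast
  have "left_special L (map s [0..<n])" for n
  proof -
    obtain u' where "left_special L (map s [0..<n] @ u')"
      using s[of n] unfolding P_def by blast
    then show ?thesis
      using left_special_take[of L "map s [0..<n] @ u'" n] by simp
  qed
  then have "s \<in> SP L"
    by (simp add: SP_def)
  then show ?thesis
    by blast
qed

lemma W_SP_nonempty:
  fixes L :: "(nat \<Rightarrow> 'a::finite) set"
  assumes "is_shift L" and "\<forall>n. \<exists>u. left_special L u \<and> n \<le> length u"
  shows "W_SP L \<noteq> {}"
proof -
  obtain s where "s \<in> SP L"
    using SP_nonempty[OF assms(2)] by blast
  moreover obtain t where "t \<in> L" "shift t = s"
    using SP_subset_shift_image[OF assms(1)] calculation by blast
  ultimately have "t \<in> W_SP L"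
    by (simp add: W_SP_def)
  then show ?thesis
    by blast
qed

lemma VsetE:
  assumes "v \<in> Vset L"
  obtains a u where "v = a # u" "v \<in> Fact L" "u \<noteq> []" "\<not> left_special L u"
    "\<And>k. 0 < k \<Longrightarrow> k < length u \<Longrightarrow> left_special L (take k u)"
  using assms unfolding Vset_def by blast

lemma Cyl_Vset_nonempty: "is_shift L \<Longrightarrow> v \<in> Vset L \<Longrightarrow> Cyl L v \<noteq> {}"
  using Cyl_nonempty_iff by (blast elim: VsetE)

lemma Vset_first_letter:
  assumes "a # u \<in> Vset L" and "z \<in> L" and "is_prefix u (shift z)"
  shows "z 0 = a"
proof -
  have "z 0 # u \<in> Fact L"
    using assms(2,3) by (simp add: Fact_if_prefix is_prefix_Cons_iff)
  \<comment> \<open>\<open>u\<close> is not left special, so \<open>a\<close> is the only letter that can precede it.\<close>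
  then show ?thesis
    using assms(1) by (blast elim: VsetE intro: left_special_def[THEN iffD2])
qed

lemma ex_Vset_Cyl_if_notin_W_SP:
  assumes "left_special L []" and "w \<in> L" and "w \<notin> W_SP L"
  shows "\<exists>v\<in>Vset L. w \<in> Cyl L v"
proof -
  have "\<exists>n. \<not> left_special L (map (shift w) [0..<n])"
    using assms(2,3) by (simp add: W_SP_def SP_def)
  then obtain n where n: "\<not> left_special L (map (shift w) [0..<n])"
    and less_n: "\<And>k. k < n \<Longrightarrow> left_special L (map (shift w) [0..<k])"
    using exists_least_iff[of "\<lambda>n. \<not> left_special L (map (shift w) [0..<n])"] by blast
  define u where "u = map (shift w) [0..<n]"
  have "n \<noteq> 0"
    using n assms(1) by (cases n) auto
  have prefix: "is_prefix (w 0 # u) w"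
    by (simp add: u_def is_prefix_Cons_iff)
  have "w 0 # u \<in> Vset L"
    unfolding Vset_def
  proof (intro CollectI exI conjI allI impI)
    show "w 0 # u \<in> Fact L"
      using assms(2) prefix by (rule Fact_if_prefix)
    show "u \<noteq> []" "\<not> left_special L u"
      using \<open>n \<noteq> 0\<close> n by (simp_all add: u_def)
    fix k assume "0 < k \<and> k < length u"
    then show "left_special L (take k u)"
      using less_n[of k] by (simp add: u_def take_map)
  qed simp
  moreover have "w \<in> Cyl L (w 0 # u)"
    using assms(2) prefix by (simp add: Cyl_def)
  ultimately show ?thesis
    by blast
qed

lemma Vset_eq_if_prefix:
  assumes "v \<in> Vset L" and "v' \<in> Vset L" and "take (length v) v' = v"
  shows "v = v'"
proof (rule ccontr)
  assume "v \<noteq> v'"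
  obtain a u where v: "v = a # u" "u \<noteq> []" "\<not> left_special L u"
    using assms(1) by (blast elim: VsetE)
  obtain a' u' where v': "v' = a' # u'"
    and ls': "\<And>k. 0 < k \<Longrightarrow> k < length u' \<Longrightarrow> left_special L (take k u')"
    using assms(2) by (blast elim: VsetE)
  have "a' = a" "take (length u) u' = u"
    using assms(3) v(1) v' by simp_all
  have "length u < length u'"
  proof (rule ccontr)
    assume "\<not> length u < length u'"
    then have "u = u'"
      using \<open>take (length u) u' = u\<close> by simp
    then show False
      using \<open>v \<noteq> v'\<close> v(1) v' \<open>a' = a\<close> by simp
  qed
  then show False
    using ls'[of "length u"] v(2,3) \<open>take (length u) u' = u\<close> by simp
qed

lemma Vset_eq_if_Cyl_inter:
  assumes "v \<in> Vset L" and "v' \<in> Vset L" and "x \<in> Cyl L v" and "x \<in> Cyl L v'"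
  shows "v = v'"
proof -
  have "v = map x [0..<length v]" "v' = map x [0..<length v']"
    using assms(3,4) by (simp_all add: Cyl_def prefix_eq_map)
  then have "take (length v) v' = v \<or> take (length v') v = v'"
    by (metis nle_le take_map take_upt add_0 min.absorb1)
  then show ?thesis
    using Vset_eq_if_prefix assms(1,2) by metis
qed

lemma Cyl_Vset_disjoint_W_SP:
  assumes "v \<in> Vset L"
  shows "Cyl L v \<inter> W_SP L = {}"
proof -
  obtain a u where v: "v = a # u" "\<not> left_special L u"
    using assms by (blast elim: VsetE)
  have "x \<notin> W_SP L" if "x \<in> Cyl L v" for x
  proof -
    have "is_prefix u (shift x)"
      using that v(1) by (simp add: Cyl_def is_prefix_Cons_iff)
    then have "u = map (shift x) [0..<length u]"
      by (rule prefix_eq_map)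
    moreover have "left_special L (map (shift x) [0..<length u])" if "shift x \<in> SP L"
      using that by (simp add: SP_def)
    ultimately show ?thesis
      using v(2) by (auto simp: W_SP_def)
  qed
  then show ?thesis
    by blast
qed

lemma interval_subset_Cyl:
  assumes "w \<in> Cyl L v" and "w' \<in> Cyl L v"
  shows "interval L w w' \<subseteq> Cyl L v"
proof
  fix x assume "x \<in> interval L w w'"
  then have x: "x \<in> L" "lex_le w x" "lex_le x w'"
    by (simp_all add: interval_def)
  have "\<forall>i<length v. w i = w' i"
    using assms by (simp add: Cyl_def is_prefix_def)
  then have "\<forall>i<length v. x i = w i"
    by (rule lex_le_between_agree[OF x(2,3)])
  then show "x \<in> Cyl L v"
    using x(1) assms(1) by (simp add: Cyl_def is_prefix_def)
qed

lemma shift_interval: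
  assumes "shift ` L = L" and "v \<in> Vset L" and w: "w \<in> Cyl L v" and w': "w' \<in> Cyl L v"
  shows "shift ` interval L w w' = interval L (shift w) (shift w')"
proof -
  obtain a u where v: "v = a # u"
    using assms(2) by (blast elim: VsetE)
  have shift_Cyl: "x 0 = a \<and> shift x \<in> Cyl L u" if "x \<in> Cyl L v" for x
    using that assms(1) v by (auto simp: Cyl_def is_prefix_Cons_iff)
  show ?thesis
  proof
    show "shift ` interval L w w' \<subseteq> interval L (shift w) (shift w')"
    proof
      fix y assume "y \<in> shift ` interval L w w'"
      then obtain x where x: "x \<in> interval L w w'" "y = shift x"
        by blast
      then have "x 0 = a" "shift x \<in> L"
        using interval_subset_Cyl[OF w w'] shift_Cyl by (auto simp: Cyl_def)
      then show "y \<in> interval L (shift w) (shift w')"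
        using x shift_Cyl[OF w] shift_Cyl[OF w'] by (auto simp: interval_def lex_le_shift_iff)
    qed
    show "interval L (shift w) (shift w') \<subseteq> shift ` interval L w w'"
    proof
      fix y assume y: "y \<in> interval L (shift w) (shift w')"
      then have "y \<in> Cyl L u"
        using interval_subset_Cyl shift_Cyl[OF w] shift_Cyl[OF w'] by blast
      obtain z where z: "z \<in> L" "y = shift z"
        using y assms(1) by (auto simp: interval_def)
      then have "z 0 = a"
        using Vset_first_letter assms(2) v \<open>y \<in> Cyl L u\<close> by (auto simp: Cyl_def)
      then have "z \<in> interval L w w'"
        using y z shift_Cyl[OF w] shift_Cyl[OF w'] by (auto simp: interval_def lex_le_shift_iff[symmetric])
      then show "y \<in> shift ` interval L w w'"
        using z(2) by blast
    qed
  qed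
qed

lemma finite_subsingleton: "(\<And>x y. x \<in> A \<Longrightarrow> y \<in> A \<Longrightarrow> x = y) \<Longrightarrow> finite A"
  by (metis finite.simps insertI1 subsetI subset_antisym rev_finite_subset)

lemma finite_endpoints_inter_Cyl:
  assumes "v \<in> Vset L"
  shows "finite (endpoints L \<inter> Cyl L v)"
proof -
  have "endpoints L \<inter> Cyl L v \<subseteq>
      {m \<in> Cyl L v. \<forall>y\<in>Cyl L v. lex_le m y} \<union> {m \<in> Cyl L v. \<forall>y\<in>Cyl L v. lex_le y m}"
    using Vset_eq_if_Cyl_inter[OF _ assms] unfolding endpoints_def by blast
  moreover have "finite {m \<in> Cyl L v. \<forall>y\<in>Cyl L v. lex_le m y}"
    by (rule finite_subsingleton) (auto intro: lex_le_antisym)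
  moreover have "finite {m \<in> Cyl L v. \<forall>y\<in>Cyl L v. lex_le y m}"
    by (rule finite_subsingleton) (auto intro: lex_le_antisym)
  ultimately show ?thesis
    using finite_subset by blast
qed

lemma derived_endpoints_subset_W_SP:
  assumes "left_special L []"
  shows "L \<inter> (subtopology cantor_top L) derived_set_of (endpoints L) \<subseteq> W_SP L"
proof
  fix x assume x: "x \<in> L \<inter> (subtopology cantor_top L) derived_set_of (endpoints L)"
  show "x \<in> W_SP L"
  proof (rule ccontr)
    assume "x \<notin> W_SP L"
    then obtain v where v: "v \<in> Vset L" "x \<in> Cyl L v"
      using ex_Vset_Cyl_if_notin_W_SP[OF assms] x by blast
    define F where "F = endpoints L \<inter> Cyl L v - {x}"
    have "t1_space (subtopology cantor_top L)"
      by (rule t1_space_subtopology[OF Hausdorff_imp_t1_space[OF Hausdorff_cantor_top]])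
    moreover have "finite F"
      using finite_endpoints_inter_Cyl[OF v(1)] by (simp add: F_def)
    moreover have "F \<subseteq> topspace (subtopology cantor_top L)"
      by (auto simp: F_def Cyl_def)
    ultimately have "closedin (subtopology cantor_top L) F"
      by (simp add: t1_space_closedin_finite)
    then have "openin (subtopology cantor_top L) (Cyl L v - F)"
      by (rule openin_diff[OF openin_Cyl])
    moreover have "x \<in> Cyl L v - F"
      using v(2) by (simp add: F_def)
    ultimately obtain y where "y \<noteq> x" "y \<in> endpoints L" "y \<in> Cyl L v - F"
      using x unfolding derived_set_of_def by blast
    then show False
      by (simp add: F_def)
  qed
qed

section \<open>Shift-invariant measures positive on cylinders\<close>

locale shift_invariant_measure =
  fixes L :: "(nat \<Rightarrow> 'a::{linorder,finite}) set" and M :: "(nat \<Rightarrow> 'a) measure"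
  assumes is_shift: "is_shift L"
    and space_M: "space M = L"
    and sets_M: "sets M = borel_sets_of (subtopology cantor_top L)"
    and shift_invariant: "\<And>S. S \<in> sets M \<Longrightarrow> emeasure M (shift -` S \<inter> space M) = emeasure M S"
    and Cyl_positive: "\<And>v. Cyl L v \<noteq> {} \<Longrightarrow> emeasure M (Cyl L v) > 0"
    and SP_null: "emeasure M (SP L) = 0"
    and left_special_Nil: "left_special L []"
begin

lemma openin_sets: "openin (subtopology cantor_top L) U \<Longrightarrow> U \<in> sets M"
  unfolding sets_M borel_sets_of_def by (auto intro: sigma_sets.Basic)

lemma closedin_sets:
  assumes "closedin (subtopology cantor_top L) S"
  shows "S \<in> sets M"
proof -
  have "openin (subtopology cantor_top L) (L - S)" "S \<subseteq> L"
    using assms by (auto simp: closedin_def)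
  then have "L - (L - S) \<in> sigma_sets L {U. openin (subtopology cantor_top L) U}"
    by (intro sigma_sets.Compl sigma_sets.Basic) simp
  then show ?thesis
    using \<open>S \<subseteq> L\<close> by (simp add: sets_M borel_sets_of_def double_diff)
qed

lemma Cyl_subset_null_empty:
  assumes "S \<in> sets M" and "emeasure M S = 0" and "Cyl L v \<subseteq> S"
  shows "Cyl L v = {}"
proof (rule ccontr)
  assume "Cyl L v \<noteq> {}"
  then have "0 < emeasure M (Cyl L v)"
    by (rule Cyl_positive)
  also have "\<dots> \<le> emeasure M S"
    by (rule emeasure_mono[OF assms(3,1)])
  finally show False
    using assms(2) by simp
qed

lemma openin_null_empty:
  assumes "openin (subtopology cantor_top L) U" and "emeasure M U = 0"
  shows "U = {}"
proof (rule ccontr)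
  assume "U \<noteq> {}"
  then obtain y where "y \<in> U"
    by blast
  have "U \<subseteq> L" "\<forall>x\<in>U. \<exists>n. cyl n x \<inter> L \<subseteq> U"
    using assms(1) unfolding openin_subtopology_cantor_top_iff by blast+
  then obtain n where "Cyl L (map y [0..<n]) \<subseteq> U"
    using \<open>y \<in> U\<close> by (auto simp: Cyl_map_prefix)
  then have "Cyl L (map y [0..<n]) = {}"
    using Cyl_subset_null_empty openin_sets[OF assms(1)] assms(2) by blast
  moreover have "y \<in> Cyl L (map y [0..<n])"
    using \<open>y \<in> U\<close> \<open>U \<subseteq> L\<close> by (auto simp: Cyl_map_prefix)
  ultimately show False
    by blast
qed

lemma shift_image_eq: "shift ` L = L"
proof -
  have L: "closedin cantor_top L" "shift ` L \<subseteq> L"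
    using is_shift by (simp_all add: is_shift_def)
  \<comment> \<open>Points outside the image have no preimage, so by invariance they form a null open set.\<close>
  have "openin (subtopology cantor_top L) (L - shift ` L)"
    by (rule openin_subtopology_diff_closed) (simp_all add: closedin_shift_image L(1))
  moreover have "emeasure M (L - shift ` L) = 0"
  proof -
    have "shift -` (L - shift ` L) \<inter> space M = {}"
      using space_M by auto
    then show ?thesis
      using shift_invariant[OF openin_sets[OF calculation]] by simp
  qed
  ultimately have "L - shift ` L = {}"
    by (rule openin_null_empty)
  then show ?thesis
    using L(2) by blast
qed

lemma W_SP_sets: "W_SP L \<in> sets M"
  by (rule closedin_sets[OF closedin_W_SP])

lemma W_SP_null: "emeasure M (W_SP L) = 0"
proof -
  have "SP L \<subseteq> L"
    using SP_subset_shift_image[OF is_shift] shift_image_eq by simp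
  then have "closedin (subtopology cantor_top L) (SP L)"
    using closedin_subtopology_Int_closed[OF closedin_SP[of L], of L] by (simp add: Int_absorb1)
  then have "emeasure M (shift -` SP L \<inter> space M) = 0"
    using shift_invariant[OF closedin_sets] SP_null by simp
  moreover have "shift -` SP L \<inter> space M = W_SP L"
    using space_M by (auto simp: W_SP_def)
  ultimately show ?thesis
    by simp
qed

lemma W_SP_approx_by_Vset_Cyl:
  assumes "w \<in> W_SP L"
  shows "\<exists>v\<in>Vset L. n < length v \<and> Cyl L v \<subseteq> cyl n w"
proof -
  have "w \<in> Cyl L (map w [0..<n])"
    using assms by (simp add: Cyl_def W_SP_def)
  then have "\<not> Cyl L (map w [0..<n]) \<subseteq> W_SP L"
    using Cyl_subset_null_empty[OF W_SP_sets W_SP_null] by blast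
  then obtain x where x: "x \<in> Cyl L (map w [0..<n])" "x \<notin> W_SP L"
    by blast
  then obtain v where v: "v \<in> Vset L" "x \<in> Cyl L v"
    using ex_Vset_Cyl_if_notin_W_SP[OF left_special_Nil] by (auto simp: Cyl_def)
  have agree: "w i = v ! i" if "i < n" "i < length v" for i
  proof -
    have "x i = w i"
      using x(1) that(1) by (simp add: Cyl_map_prefix cyl_def)
    moreover have "x i = v ! i"
      using v(2) that(2) by (simp add: Cyl_def is_prefix_def)
    ultimately show ?thesis
      by simp
  qed
  show ?thesis
  proof (cases "length v \<le> n")
    case True
    then have "w \<in> Cyl L v"
      using agree assms by (simp add: Cyl_def is_prefix_def W_SP_def)
    then show ?thesis
      using Cyl_Vset_disjoint_W_SP[OF v(1)] assms by blast
  next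
    case False
    have "Cyl L v \<subseteq> cyl n w"
    proof
      fix y assume "y \<in> Cyl L v"
      then have "y i = v ! i" if "i < length v" for i
        using that by (simp add: Cyl_def is_prefix_def)
      then show "y \<in> cyl n w"
        using agree False by (simp add: cyl_def)
    qed
    then show ?thesis
      using v(1) False by (intro bexI[of _ v]) simp_all
  qed
qed

lemma infinite_Vset:
  assumes "W_SP L \<noteq> {}"
  shows "infinite (Vset L)"
proof
  assume "finite (Vset L)"
  obtain w where "w \<in> W_SP L"
    using assms by blast
  then obtain v where "v \<in> Vset L" "Max (length ` Vset L) < length v"
    using W_SP_approx_by_Vset_Cyl by blast
  moreover have "length v \<le> Max (length ` Vset L)"
    using \<open>finite (Vset L)\<close> \<open>v \<in> Vset L\<close> by (simp add: Max_ge)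
  ultimately show False
    by simp
qed

lemma W_SP_subset_derived_endpoints:
  "W_SP L \<subseteq> L \<inter> (subtopology cantor_top L) derived_set_of (endpoints L)"
proof
  fix w assume w: "w \<in> W_SP L"
  then have "w \<in> L"
    by (simp add: W_SP_def)
  moreover have "\<exists>y. y \<noteq> w \<and> y \<in> endpoints L \<and> y \<in> T"
    if T: "w \<in> T" "openin (subtopology cantor_top L) T" for T
  proof -
    obtain n where n: "cyl n w \<inter> L \<subseteq> T"
      using T unfolding openin_subtopology_cantor_top_iff by blast
    obtain v where v: "v \<in> Vset L" "Cyl L v \<subseteq> cyl n w"
      using W_SP_approx_by_Vset_Cyl[OF w] by blast
    have "closedin cantor_top L"
      using is_shift by (simp add: is_shift_def)
    then have "closedin cantor_top (Cyl L v)"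
      by (rule closedin_Cyl)
    then obtain m where m: "m \<in> Cyl L v" "\<forall>y\<in>Cyl L v. lex_le m y"
      using ex_lex_least Cyl_Vset_nonempty[OF is_shift v(1)] by blast
    have "m \<in> endpoints L"
      unfolding endpoints_def using v(1) m by blast
    moreover have "m \<noteq> w"
      using Cyl_Vset_disjoint_W_SP[OF v(1)] m(1) w by blast
    moreover have "m \<in> T"
      using m(1) v(2) n by (auto simp: Cyl_def)
    ultimately show ?thesis
      by blast
  qed
  ultimately show "w \<in> L \<inter> (subtopology cantor_top L) derived_set_of (endpoints L)"
    by (auto simp: derived_set_of_def)
qed

end

theorem mainTheorem11:
  fixes L :: "(nat \<Rightarrow> 'a::{linorder,finite}) set"
    and M :: "(nat \<Rightarrow> 'a) measure"
  assumes shiftL: "is_shift L"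
    and ls_long: "\<forall>n. \<exists>u. left_special L u \<and> n \<le> length u"
    and prob: "prob_space M"
    and space_M: "space M = L"
    and borel_M: "sets M = borel_sets_of (subtopology cantor_top L)"
    and inv: "\<forall>S\<in>sets M. emeasure M (shift -` S \<inter> space M) = emeasure M S"
    and nonatomic: "\<forall>w\<in>L. emeasure M {w} = 0"
    and regular: "regular_measure (subtopology cantor_top L) M"
    and pos: "\<forall>v. Cyl L v \<noteq> {} \<longrightarrow> emeasure M (Cyl L v) > 0"
    and SP_null: "emeasure M (SP L) = 0"
  shows "infinite (Vset L)
    \<and> L = (\<Union>v\<in>Vset L. Cyl L v) \<union> W_SP L
    \<and> (\<forall>v\<in>Vset L. \<forall>v'\<in>Vset L. v \<noteq> v' \<longrightarrow> Cyl L v \<inter> Cyl L v' = {})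
    \<and> (\<forall>v\<in>Vset L. Cyl L v \<inter> W_SP L = {})
    \<and> (\<forall>v\<in>Vset L. \<forall>w\<in>Cyl L v. \<forall>w'\<in>Cyl L v. lex_less w w' \<longrightarrow>
          shift ` interval L w w' = interval L (shift w) (shift w'))
    \<and> W_SP L \<noteq> {}
    \<and> W_SP L \<in> sets M \<and> emeasure M (W_SP L) = 0
    \<and> W_SP L = L \<inter> ((subtopology cantor_top L) derived_set_of (endpoints L))"
proof -
  have ls_Nil: "left_special L []"
    using ls_long by (rule left_special_Nil)
  interpret shift_invariant_measure L M
    using shiftL space_M borel_M inv pos SP_null ls_Nil by unfold_locales auto
  have W_SP_ne: "W_SP L \<noteq> {}"
    using shiftL ls_long by (rule W_SP_nonempty)
  show ?thesis
  proof (intro conjI)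
    show "infinite (Vset L)"
      using W_SP_ne by (rule infinite_Vset)
    show "L = (\<Union>v\<in>Vset L. Cyl L v) \<union> W_SP L"
      using ex_Vset_Cyl_if_notin_W_SP[OF ls_Nil] by (auto simp: Cyl_def W_SP_def)
    show "\<forall>v\<in>Vset L. \<forall>v'\<in>Vset L. v \<noteq> v' \<longrightarrow> Cyl L v \<inter> Cyl L v' = {}"
      using Vset_eq_if_Cyl_inter by blast
    show "\<forall>v\<in>Vset L. Cyl L v \<inter> W_SP L = {}"
      using Cyl_Vset_disjoint_W_SP by blast
    show "\<forall>v\<in>Vset L. \<forall>w\<in>Cyl L v. \<forall>w'\<in>Cyl L v. lex_less w w' \<longrightarrow>
        shift ` interval L w w' = interval L (shift w) (shift w')"
      using shift_interval[OF shift_image_eq] by blast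
    show "W_SP L = L \<inter> (subtopology cantor_top L) derived_set_of (endpoints L)"
      using W_SP_subset_derived_endpoints derived_endpoints_subset_W_SP[OF ls_Nil]
      by (rule subset_antisym)
  qed (use W_SP_ne W_SP_sets W_SP_null in auto)
qed

end
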